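(* In the Biggs-Smith graph $\mathrm{BS}$, every path of length at most $7$ contained in the $a$-cycle is a geodesic (a shortest path between its endpoints).
   Context: The Biggs-Smith graph $\mathrm{BS}$ is the cubic graph on the $102$ vertices $ia,ib,ic,id,ie,if$ for $i\in\{1,\dots,17\}$ (indices taken modulo 17, with $0$ written as $17$), whose edges are: $ie\,ia$, $ie\,ib$, $ie\,if$, $if\,ic$, $if\,id$ for each $i$; and $ia\,(i+1)a$, $ib\,(i+4)b$, $ic\,(i+2)c$, $id\,(i+8)d$ for each $i$. The $a$-cycle is the $17$-cycle $1a,2a,\dots,17a,1a$ formed by the edges $ia\,(i+1)a$. *)

theory Defs
  imports Main
begin

text \<open>The Biggs-Smith graph. A vertex is a pair (i, x) with i an index modulo 17
  (represented by 0..16, where the paper's label 17 corresponds to 0) and x a letter.\<close>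

datatype letter = La | Lb | Lc | Ld | Le | Lf

type_synonym bs_vertex = "nat \<times> letter"

definition bs_vertices :: "bs_vertex set" where
  "bs_vertices = {0..<17} \<times> UNIV"

definition bs_edge0 :: "bs_vertex \<Rightarrow> bs_vertex \<Rightarrow> bool" where
  "bs_edge0 u v \<longleftrightarrow> (\<exists>i<17.
      (u = (i, Le) \<and> v = (i, La)) \<or>
      (u = (i, Le) \<and> v = (i, Lb)) \<or>
      (u = (i, Le) \<and> v = (i, Lf)) \<or>
      (u = (i, Lf) \<and> v = (i, Lc)) \<or>
      (u = (i, Lf) \<and> v = (i, Ld)) \<or>
      (u = (i, La) \<and> v = ((i + 1) mod 17, La)) \<or>
      (u = (i, Lb) \<and> v = ((i + 4) mod 17, Lb)) \<or>
      (u = (i, Lc) \<and> v = ((i + 2) mod 17, Lc)) \<or>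
      (u = (i, Ld) \<and> v = ((i + 8) mod 17, Ld)))"

definition bs_adj :: "bs_vertex \<Rightarrow> bs_vertex \<Rightarrow> bool" where
  "bs_adj u v \<longleftrightarrow> bs_edge0 u v \<or> bs_edge0 v u"

definition acycle_adj :: "bs_vertex \<Rightarrow> bs_vertex \<Rightarrow> bool" where
  "acycle_adj u v \<longleftrightarrow> (\<exists>i<17.
      (u = (i, La) \<and> v = ((i + 1) mod 17, La)) \<or>
      (v = (i, La) \<and> u = ((i + 1) mod 17, La)))"

text \<open>Walks in a graph given by an adjacency relation, as nonempty vertex lists;
  the length of a walk is its number of edges, i.e. length of the list minus 1.\<close>
definition is_walk :: "('v \<Rightarrow> 'v \<Rightarrow> bool) \<Rightarrow> 'v list \<Rightarrow> bool" where
  "is_walk E p \<longleftrightarrow> p \<noteq> [] \<and> (\<forall>j. Suc j < length p \<longrightarrow> E (p ! j) (p ! Suc j))"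

definition is_path :: "('v \<Rightarrow> 'v \<Rightarrow> bool) \<Rightarrow> 'v list \<Rightarrow> bool" where
  "is_path E p \<longleftrightarrow> is_walk E p \<and> distinct p"

definition bs_geodesic :: "bs_vertex list \<Rightarrow> bool" where
  "bs_geodesic p \<longleftrightarrow> is_path bs_adj p \<and>
     (\<forall>q. is_walk bs_adj q \<and> hd q = hd p \<and> last q = last p \<longrightarrow> length p \<le> length q)"

end

theory Submission
  imports Defs
begin

text \<open>Every walk in BS from 0a to v has length at least the distance of v from 0a, which we
  tabulate explicitly and certify by checking that it changes by at most 1 along every edge.
  The index shift i \<mapsto> i + 1 is an automorphism of BS, and a path in the a-cycle moves
  around the cycle in one direction, so after shifting, a path of length n \<le> 7 joins 0a to
  na or to (17 - n)a; both lie at distance n from 0a.\<close>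

lemma less_17_cases:
  "i < (17::nat) \<Longrightarrow> i = 0 \<or> i = 1 \<or> i = 2 \<or> i = 3 \<or> i = 4 \<or> i = 5 \<or> i = 6 \<or> i = 7 \<or>
    i = 8 \<or> i = 9 \<or> i = 10 \<or> i = 11 \<or> i = 12 \<or> i = 13 \<or> i = 14 \<or> i = 15 \<or> i = 16"
  by presburger

lemma is_walk_Cons_Cons: "is_walk E (x # y # ys) \<longleftrightarrow> E x y \<and> is_walk E (y # ys)"
  unfolding is_walk_def by (auto simp: less_Suc_eq_0_disj)

lemma is_walk_map:
  assumes "\<And>u v. E u v \<Longrightarrow> F (f u) (f v)" and "is_walk E p"
  shows "is_walk F (map f p)"
  using assms unfolding is_walk_def by simp

lemma is_walk_lipschitz:
  fixes h :: "'v \<Rightarrow> nat"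
  assumes "is_walk E q" and "\<And>u v. E u v \<Longrightarrow> h v \<le> h u + 1"
  shows "h (last q) \<le> h (hd q) + (length q - 1)"
  using assms(1)
proof (induction q rule: induct_list012)
  case (3 x y zs)
  then have "E x y" and "is_walk E (y # zs)" by (simp_all add: is_walk_Cons_Cons)
  with "3.IH"(2) assms(2)[of x y] show ?case by simp
qed (simp_all add: is_walk_def)

definition dist_a0 :: "bs_vertex \<Rightarrow> nat" where
  "dist_a0 v = (case snd v of
     La \<Rightarrow> [0, 1, 2, 3, 4, 5, 6, 7, 6, 6, 7, 6, 5, 4, 3, 2, 1]
   | Lb \<Rightarrow> [2, 3, 4, 4, 3, 4, 5, 5, 4, 4, 5, 5, 4, 3, 4, 4, 3]
   | Lc \<Rightarrow> [3, 4, 4, 5, 5, 6, 6, 7, 6, 6, 7, 6, 6, 5, 5, 4, 4]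
   | Ld \<Rightarrow> [3, 4, 5, 6, 6, 7, 6, 5, 4, 4, 5, 6, 7, 6, 6, 5, 4]
   | Le \<Rightarrow> [1, 2, 3, 4, 4, 5, 6, 6, 5, 5, 6, 6, 5, 4, 4, 3, 2]
   | Lf \<Rightarrow> [2, 3, 4, 5, 5, 6, 7, 6, 5, 5, 6, 7, 6, 5, 5, 4, 3]) ! fst v"

lemma dist_a0_bs_edge0:
  "bs_edge0 u v \<Longrightarrow> dist_a0 v \<le> dist_a0 u + 1 \<and> dist_a0 u \<le> dist_a0 v + 1"
  unfolding bs_edge0_def
  by (elim exE conjE, frule less_17_cases) (elim disjE; simp add: dist_a0_def)

lemma dist_a0_bs_adj: "bs_adj u v \<Longrightarrow> dist_a0 v \<le> dist_a0 u + 1"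
  unfolding bs_adj_def using dist_a0_bs_edge0 by blast

lemma dist_a0_a_cycle:
  assumes "n \<le> 7" and "s \<in> {1, 16}"
  shows "dist_a0 (n * s mod 17, La) = n"
  using less_17_cases[of n] assms by (auto simp: dist_a0_def)

definition bs_rotate :: "nat \<Rightarrow> bs_vertex \<Rightarrow> bs_vertex" where
  "bs_rotate k v = ((fst v + k) mod 17, snd v)"

lemma bs_edge0_rotate:
  assumes "bs_edge0 u v"
  shows "bs_edge0 (bs_rotate k u) (bs_rotate k v)"
proof -
  have shift: "((i + d) mod 17 + k) mod 17 = ((i + k) mod 17 + d) mod (17::nat)" for i d
    by (simp add: mod_simps ac_simps)
  from assms show ?thesis
    unfolding bs_edge0_def bs_rotate_def
    apply (elim exE conjE)
    subgoal for i
      by (intro exI[of _ "(i + k) mod 17"])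
        (elim disjE conjE; simp only: fst_conv snd_conv shift; simp)
    done
qed

lemma bs_adj_rotate: "bs_adj u v \<Longrightarrow> bs_adj (bs_rotate k u) (bs_rotate k v)"
  unfolding bs_adj_def using bs_edge0_rotate by blast

lemma bs_walk_length_ge_dist_a0:
  assumes "is_walk bs_adj q" and "i < 17"
    and "hd q = (i, La)" and "last q = ((i + k) mod 17, La)"
  shows "dist_a0 (k mod 17, La) \<le> length q - 1"
proof -
  define q' where "q' = map (bs_rotate (17 - i)) q"
  have "q \<noteq> []" using assms(1) by (simp add: is_walk_def)
  have "is_walk bs_adj q'"
    unfolding q'_def using bs_adj_rotate assms(1) by (rule is_walk_map)
  then have "dist_a0 (last q') \<le> dist_a0 (hd q') + (length q' - 1)"
    by (rule is_walk_lipschitz) (fact dist_a0_bs_adj)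
  moreover have "hd q' = (0, La)"
    using \<open>q \<noteq> []\<close> assms(2,3) by (simp add: q'_def hd_map bs_rotate_def)
  moreover have "i + k + (17 - i) = k + 17"
    using assms(2) by simp
  then have "bs_rotate (17 - i) ((i + k) mod 17, La) = (k mod 17, La)"
    unfolding bs_rotate_def by (metis fst_conv snd_conv mod_add_left_eq mod_add_self2)
  then have "last q' = (k mod 17, La)"
    using \<open>q \<noteq> []\<close> assms(4) by (simp add: q'_def last_map)
  moreover have "dist_a0 (0, La) = 0"
    by (simp add: dist_a0_def)
  ultimately show ?thesis by (simp add: q'_def)
qed

lemma acycle_adj_step:
  assumes "acycle_adj u v"
  obtains i s where "i < 17" "s \<in> {1, 16}" "u = (i, La)" "v = ((i + s) mod 17, La)"
proof -
  from assms obtain i where "i < 17"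
    and "(u = (i, La) \<and> v = ((i + 1) mod 17, La)) \<or> (v = (i, La) \<and> u = ((i + 1) mod 17, La))"
    unfolding acycle_adj_def by blast
  then consider "u = (i, La)" "v = ((i + 1) mod 17, La)"
    | "v = (i, La)" "u = ((i + 1) mod 17, La)" by blast
  then show ?thesis
  proof cases
    case 1
    then show ?thesis using that \<open>i < 17\<close> by blast
  next
    case 2
    have "((i + 1) mod 17 + 16) mod 17 = i"
      using \<open>i < 17\<close> by (simp add: mod_simps)
    then show ?thesis using that[of "(i + 1) mod 17" 16] 2 by simp
  qed
qed

text \<open>Consecutive steps of a path in the a-cycle cannot be opposite (that would revisit a
  vertex), so the path winds around the cycle with a constant step; the step -1 is written
  as +16 to stay within nat.\<close>
lemma acycle_path_constant_step:
  assumes "is_path acycle_adj p" and "2 \<le> length p"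
  shows "\<exists>i<17. \<exists>s\<in>{1, 16}. \<forall>j<length p. p ! j = ((i + j * s) mod 17, La)"
  using assms
proof (induction p rule: induct_list012)
  case (3 x y zs)
  then have xy: "acycle_adj x y" and x_notin: "x \<notin> set (y # zs)"
    and path: "is_path acycle_adj (y # zs)"
    by (auto simp: is_path_def is_walk_Cons_Cons)
  obtain i s where "i < 17" "s \<in> {1, 16}" and x: "x = (i, La)" and y: "y = ((i + s) mod 17, La)"
    using xy by (rule acycle_adj_step)
  show ?case
  proof (cases zs)
    case Nil
    then show ?thesis
      using \<open>i < 17\<close> \<open>s \<in> {1, 16}\<close> x y by (auto simp: less_Suc_eq)
  next
    case (Cons z zs')
    have "2 \<le> length (y # zs)" using Cons by simp
    from "3.IH"(2)[OF path this] obtain i' s' where "s' \<in> {1, 16}" and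
      rest: "\<forall>j<length (y # zs). (y # zs) ! j = ((i' + j * s') mod 17, La)"
      by blast
    have "y = (i' mod 17, La)" using rest by auto
    then have i': "i' mod 17 = (i + s) mod 17" using y by simp
    have "z = ((i' + s') mod 17, La)" using rest[rule_format, of 1] Cons by simp
    then have z: "z = ((i + s + s') mod 17, La)" using i' by (metis mod_add_left_eq)
    have "s' = s"
    proof (rule ccontr)
      assume "s' \<noteq> s"
      then have "s + s' = 17" using \<open>s \<in> {1, 16}\<close> \<open>s' \<in> {1, 16}\<close> by auto
      then have "z = x" using z x \<open>i < 17\<close> by (simp add: mod_simps add.assoc)
      then show False using x_notin Cons by simp
    qed
    have "(x # y # zs) ! j = ((i + j * s) mod 17, La)" if "j < length (x # y # zs)" for j
    proof (cases j)
      case 0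
      then show ?thesis using x \<open>i < 17\<close> by simp
    next
      case (Suc j')
      then have "(x # y # zs) ! j = ((i' + j' * s) mod 17, La)"
        using rest that \<open>s' = s\<close> by simp
      also have "\<dots> = ((i + j * s) mod 17, La)"
        using i' Suc by (metis mod_add_left_eq add.assoc mult_Suc)
      finally show ?thesis .
    qed
    then show ?thesis using \<open>i < 17\<close> \<open>s \<in> {1, 16}\<close> by blast
  qed
qed simp_all

lemma acycle_adj_bs_adj:
  assumes "acycle_adj u v"
  shows "bs_adj u v"
proof -
  obtain i where "i < 17"
    and "(u = (i, La) \<and> v = ((i + 1) mod 17, La)) \<or> (v = (i, La) \<and> u = ((i + 1) mod 17, La))"
    using assms unfolding acycle_adj_def by blast
  then have "bs_edge0 u v \<or> bs_edge0 v u"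
    unfolding bs_edge0_def by (elim disjE conjE) (simp_all add: exI[of _ i])
  then show ?thesis unfolding bs_adj_def .
qed

theorem lemma2p5:
  fixes p :: "bs_vertex list"
  assumes "is_path acycle_adj p"
    and "length p - 1 \<le> 7"
  shows "bs_geodesic p"
  unfolding bs_geodesic_def
proof (intro conjI allI impI)
  show "is_path bs_adj p"
    using assms(1) acycle_adj_bs_adj unfolding is_path_def is_walk_def by blast
  fix q
  assume q: "is_walk bs_adj q \<and> hd q = hd p \<and> last q = last p"
  show "length p \<le> length q"
  proof (cases "2 \<le> length p")
    case False
    then show ?thesis using q by (cases q) (auto simp: is_walk_def)
  next
    case True
    define n where "n = length p - 1"
    obtain i s where "i < 17" "s \<in> {1, 16}"
      and p: "\<forall>j<length p. p ! j = ((i + j * s) mod 17, La)"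
      using acycle_path_constant_step[OF assms(1) True] by blast
    have "p \<noteq> []" using True by auto
    then have "hd p = (i, La)" and "last p = ((i + n * s) mod 17, La)"
      using p True \<open>i < 17\<close> by (simp_all add: hd_conv_nth last_conv_nth n_def)
    then have "dist_a0 (n * s mod 17, La) \<le> length q - 1"
      using bs_walk_length_ge_dist_a0[of q i "n * s"] q \<open>i < 17\<close> by simp
    then show ?thesis
      using dist_a0_a_cycle[of n s] assms(2) \<open>s \<in> {1, 16}\<close> True by (simp add: n_def)
  qed
qed

end
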